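(* Let $\theta>0$ and $1\le p,q<\infty$. Then the grand amalgam Lebesgue function space $l^{q),\theta}(L^p)$ is a Banach space with respect to the norm $\|\cdot\|_{p,q),\theta}$.
   Context: Let $X$ denote one of $\mathbb N$, $\mathbb N_0$ or $\mathbb Z$, and for $k\in X$ let $I_k=[k,k+1)$. For $1\le p,q<\infty$ and $\theta>0$, $l^{q),\theta}(L^p)$ is the set of all complex-valued measurable functions $g$ on $\bigcup_{k\in X}I_k$ with $g\chi_{I_k}\in L^p$ for each $k\in X$ and $$\|g\|_{p,q),\theta}:=\sup_{\varepsilon>0}\Big(\varepsilon^{\theta}\sum_{k\in X}\Big(\int_k^{k+1}|g(x)|^p\,dx\Big)^{\frac{q(1+\varepsilon)}{p}}\Big)^{\frac{1}{q(1+\varepsilon)}}<\infty$$ (functions equal a.e. identified). *)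

theory Defs
  imports "HOL-Analysis.Analysis"
begin

definition admissible_index :: "int set \<Rightarrow> bool" where
  "admissible_index K \<longleftrightarrow> K = {1..} \<or> K = {0..} \<or> K = UNIV"

definition Ik :: "int \<Rightarrow> real set" where
  "Ik k = {real_of_int k..<real_of_int k + 1}"

definition dom_am :: "int set \<Rightarrow> real set" where
  "dom_am K = (\<Union>k\<in>K. Ik k)"

definition loc_int :: "real \<Rightarrow> (real \<Rightarrow> complex) \<Rightarrow> int \<Rightarrow> ennreal" where
  "loc_int p g k = (\<integral>\<^sup>+ x\<in>Ik k. ennreal (cmod (g x) powr p) \<partial>lebesgue)"

definition eps_term :: "real \<Rightarrow> real \<Rightarrow> real \<Rightarrow> int set \<Rightarrow> (real \<Rightarrow> complex) \<Rightarrow> real \<Rightarrow> ennreal" where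
  "eps_term p q \<theta> K g \<epsilon> =
     (let S = (\<integral>\<^sup>+ k. ennreal (enn2real (loc_int p g k) powr (q * (1 + \<epsilon>) / p)) \<partial>count_space K)
      in if S = \<infinity> then \<infinity>
         else ennreal ((\<epsilon> powr \<theta> * enn2real S) powr (1 / (q * (1 + \<epsilon>)))))"

definition gam_norm_ext :: "real \<Rightarrow> real \<Rightarrow> real \<Rightarrow> int set \<Rightarrow> (real \<Rightarrow> complex) \<Rightarrow> ennreal" where
  "gam_norm_ext p q \<theta> K g = (SUP \<epsilon>\<in>{0<..}. eps_term p q \<theta> K g \<epsilon>)"

definition gam_space :: "real \<Rightarrow> real \<Rightarrow> real \<Rightarrow> int set \<Rightarrow> (real \<Rightarrow> complex) set" where
  "gam_space p q \<theta> K =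
     {g. set_borel_measurable lebesgue (dom_am K) g
         \<and> (\<forall>k\<in>K. loc_int p g k < \<infinity>)
         \<and> gam_norm_ext p q \<theta> K g < \<infinity>}"

definition gam_norm :: "real \<Rightarrow> real \<Rightarrow> real \<Rightarrow> int set \<Rightarrow> (real \<Rightarrow> complex) \<Rightarrow> real" where
  "gam_norm p q \<theta> K g = enn2real (gam_norm_ext p q \<theta> K g)"

text \<open>Equality almost everywhere on the domain (functions equal a.e. are identified).\<close>
definition ae_eq_on :: "int set \<Rightarrow> (real \<Rightarrow> complex) \<Rightarrow> (real \<Rightarrow> complex) \<Rightarrow> bool" where
  "ae_eq_on K f g \<longleftrightarrow> (AE x in lebesgue. x \<in> dom_am K \<longrightarrow> f x = g x)"

end

theory Submission
  imports Defs
begin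

text \<open>
  The norm only sees the local norms \<open>a\<^sub>k(f)\<close>, the \<open>L\<^sup>p\<close> norms of \<open>f\<close> on the intervals
  \<open>I\<^sub>k\<close>: for fixed \<open>\<epsilon>\<close> it is \<open>\<epsilon>\<^sup>\<theta>\<^sup>/\<^sup>r\<close> times the \<open>\<ell>\<^sup>r\<close> norm of the sequence \<open>a(f)\<close>, where
  \<open>r = q(1+\<epsilon>) \<ge> 1\<close>, and the norm is the supremum of these over \<open>\<epsilon>\<close>. Minkowski's
  inequality, once in each \<open>L\<^sup>p(I\<^sub>k)\<close> and once in each \<open>\<ell>\<^sup>r\<close>, gives the triangle inequality.
  A Cauchy sequence has a subsequence whose consecutive differences have norm at most
  \<open>4\<^sup>-\<^sup>j\<close>; as the norm dominates every local norm, this subsequence converges a.e. on every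
  \<open>I\<^sub>k\<close>. Fatou's lemma, first in \<open>L\<^sup>p(I\<^sub>k)\<close> and then in \<open>\<ell>\<^sup>r\<close>, shows that closed balls of the
  space are closed under a.e. limits, which yields both that the limit belongs to the space
  and that the sequence converges to it in norm.
\<close>

lemma powr_inverse_le_iff:
  fixes x y r :: real
  assumes "0 < r" and "0 \<le> x" and "0 \<le> y"
  shows "x powr (1 / r) \<le> y \<longleftrightarrow> x \<le> y powr r"
proof
  assume "x powr (1 / r) \<le> y"
  then have "(x powr (1 / r)) powr r \<le> y powr r"
    using assms by (intro powr_mono2) auto
  then show "x \<le> y powr r"
    using assms by (simp add: powr_powr)
next
  assume "x \<le> y powr r"
  then have "x powr (1 / r) \<le> (y powr r) powr (1 / r)"
    using assms by (intro powr_mono2) auto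
  then show "x powr (1 / r) \<le> y"
    using assms by (simp add: powr_powr)
qed

lemma enn2real_powr_inverse_le:
  assumes "X \<le> ennreal (Y powr p)" and "0 \<le> Y" and "0 < p"
  shows "enn2real X powr (1 / p) \<le> Y"
  using assms by (simp add: powr_inverse_le_iff enn2real_leI)

lemma ennreal_powr_le_liminf:
  fixes x :: "nat \<Rightarrow> real"
  assumes t: "0 < t" and x: "\<And>j. 0 \<le> x j" and D: "0 \<le> D"
    and le: "ennreal D \<le> liminf (\<lambda>j. ennreal (x j))"
  shows "ennreal (D powr t) \<le> liminf (\<lambda>j. ennreal (x j powr t))"
  unfolding le_Liminf_iff
proof (intro allI impI)
  fix y :: ennreal
  assume y: "y < ennreal (D powr t)"
  then obtain y' where y': "y = ennreal y'" "0 \<le> y'"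
    by (cases y) auto
  with y have "y' powr (1 / t) < (D powr t) powr (1 / t)"
    using t by (intro powr_less_mono2) (auto simp: ennreal_less_iff)
  then have "ennreal (y' powr (1 / t)) < ennreal D"
    using t D by (simp add: powr_powr ennreal_less_iff)
  then have "ennreal (y' powr (1 / t)) < liminf (\<lambda>j. ennreal (x j))"
    using le by (rule order_less_le_trans)
  then have "eventually (\<lambda>j. ennreal (y' powr (1 / t)) < ennreal (x j)) sequentially"
    using le_Liminf_iff[of "liminf (\<lambda>j. ennreal (x j))" sequentially "\<lambda>j. ennreal (x j)"] by simp
  then show "eventually (\<lambda>j. y < ennreal (x j powr t)) sequentially"
  proof eventually_elim
    case (elim j)
    then have "y' powr (1 / t) < x j"
      by (simp add: ennreal_less_iff)
    then have "(y' powr (1 / t)) powr t < x j powr t"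
      using t by (intro powr_less_mono2) auto
    then show ?case
      using t y' by (simp add: powr_powr ennreal_less_iff)
  qed
qed

lemma powr_add_le_weighted:
  fixes a b u v p :: real
  assumes p: "1 \<le> p" and a: "0 < a" and b: "0 < b" and u: "0 \<le> u" and v: "0 \<le> v"
  shows "(u + v) powr p \<le> (a + b) powr (p - 1) * (u powr p / a powr (p - 1) + v powr p / b powr (p - 1))"
proof (cases "u = 0 \<or> v = 0")
  case True
  have "a powr (p - 1) \<le> (a + b) powr (p - 1)" "b powr (p - 1) \<le> (a + b) powr (p - 1)"
    using a b p by (auto intro!: powr_mono2)
  then have "w powr p \<le> (a + b) powr (p - 1) * (w powr p / c powr (p - 1))"
    if "c powr (p - 1) \<le> (a + b) powr (p - 1)" "c > 0" for w c
    using that by (simp add: field_simps mult_left_mono)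
  with True show ?thesis
    using a b p \<open>a powr (p - 1) \<le> _\<close> \<open>b powr (p - 1) \<le> _\<close> by auto
next
  case False
  have t: "0 \<le> b / (a + b)" "b / (a + b) \<le> 1" and one_minus_t: "1 - b / (a + b) = a / (a + b)"
    using a b by (auto simp: field_simps)
  have "u / a \<in> {0<..}" "v / b \<in> {0<..}"
    using False u v a b by auto
  from convex_onD[OF powr_convex[OF p] t this, unfolded one_minus_t]
  have "(a / (a + b) * (u / a) + b / (a + b) * (v / b)) powr p
      \<le> a / (a + b) * (u / a) powr p + b / (a + b) * (v / b) powr p"
    by simp
  moreover have "a / (a + b) * (u / a) + b / (a + b) * (v / b) = (u + v) / (a + b)"
    using a b by (simp add: add_divide_distrib)
  ultimately have "((u + v) / (a + b)) powr p \<le> a / (a + b) * (u / a) powr p + b / (a + b) * (v / b) powr p"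
    by simp
  then have "(u + v) powr p \<le> (a + b) powr p * (a / (a + b) * (u / a) powr p + b / (a + b) * (v / b) powr p)"
    using a b u v by (simp add: powr_divide divide_le_eq mult.commute)
  also have "\<dots> = (a + b) powr (p - 1) * (u powr p / a powr (p - 1) + v powr p / b powr (p - 1))"
  proof -
    have "C * (a / s * (U / A) + b / s * (V / B)) = C / s * (U / (A / a) + V / (B / b))"
      if "A > 0" "B > 0" "s > 0" for A B C U V s :: real
      using that a b by (simp add: field_simps)
    then show ?thesis
      using a b u v by (simp add: powr_divide powr_diff add_pos_pos)
  qed
  finally show ?thesis .
qed

lemma Minkowski_nn_integral:
  fixes u v :: "'a \<Rightarrow> real"
  assumes p: "1 \<le> p" and [measurable]: "u \<in> borel_measurable M" "v \<in> borel_measurable M"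
    and u0: "\<And>x. 0 \<le> u x" and v0: "\<And>x. 0 \<le> v x"
    and A: "(\<integral>\<^sup>+x. ennreal (u x powr p) \<partial>M) = ennreal A" and A0: "0 \<le> A"
    and B: "(\<integral>\<^sup>+x. ennreal (v x powr p) \<partial>M) = ennreal B" and B0: "0 \<le> B"
  shows "(\<integral>\<^sup>+x. ennreal ((u x + v x) powr p) \<partial>M) \<le> ennreal ((A powr (1/p) + B powr (1/p)) powr p)"
proof -
  define a b where "a = A powr (1/p)" and "b = B powr (1/p)"
  have A_eq: "A = a powr p" and B_eq: "B = b powr p"
    using A0 B0 p by (simp_all add: a_def b_def powr_powr)
  consider "a = 0" | "b = 0" | "a > 0" "b > 0"
    using A0 B0 by (fastforce simp: a_def b_def)
  then show ?thesis
  proof cases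
    case 1
    then have "AE x in M. u x = 0"
      using A u0 p by (simp add: A_eq nn_integral_0_iff_AE)
    then have "(\<integral>\<^sup>+x. ennreal ((u x + v x) powr p) \<partial>M) = ennreal B"
      by (subst B[symmetric], intro nn_integral_cong_AE) auto
    then show ?thesis
      using 1 B0 p by (simp add: a_def[symmetric] powr_powr)
  next
    case 2
    then have "AE x in M. v x = 0"
      using B v0 p by (simp add: B_eq nn_integral_0_iff_AE)
    then have "(\<integral>\<^sup>+x. ennreal ((u x + v x) powr p) \<partial>M) = ennreal A"
      by (subst A[symmetric], intro nn_integral_cong_AE) auto
    then show ?thesis
      using 2 A0 p by (simp add: b_def[symmetric] powr_powr)
  next
    case 3
    define C where "C = (a + b) powr (p - 1)"
    have "(\<integral>\<^sup>+x. ennreal ((u x + v x) powr p) \<partial>M)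
        \<le> (\<integral>\<^sup>+x. ennreal C * (ennreal (1 / a powr (p - 1)) * ennreal (u x powr p)
                          + ennreal (1 / b powr (p - 1)) * ennreal (v x powr p)) \<partial>M)"
      using powr_add_le_weighted[OF p 3 u0 v0] 3
      by (intro nn_integral_mono)
         (simp add: C_def ennreal_mult'[symmetric] ennreal_plus[symmetric] del: ennreal_plus)
    also have "\<dots> = ennreal C * (ennreal (1 / a powr (p - 1)) * ennreal A
                                  + ennreal (1 / b powr (p - 1)) * ennreal B)"
      by (simp add: nn_integral_cmult nn_integral_add A B)
    also have "\<dots> = ennreal ((a + b) powr p)"
      using 3 by (simp add: C_def A_eq B_eq ennreal_mult'[symmetric] ennreal_plus[symmetric] powr_diff
                    field_simps del: ennreal_plus)
    finally show ?thesis
      by (simp add: a_def[symmetric] b_def[symmetric])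
  qed
qed

lemma AE_summable_norm_if_nn_integral_le:
  fixes u :: "nat \<Rightarrow> 'a \<Rightarrow> 'b::real_normed_vector"
  assumes p: "0 < p" and [measurable]: "\<And>j. u j \<in> borel_measurable M"
    and le: "\<And>j. (\<integral>\<^sup>+x. ennreal (norm (u j x) powr p) \<partial>M) \<le> ennreal ((1/4) ^ j)"
  shows "AE x in M. summable (\<lambda>j. norm (u j x))"
proof -
  \<comment> \<open>\<open>\<Sum>\<^sub>j 2\<^sup>j \<parallel>u\<^sub>j\<parallel>\<^sup>p\<close> has finite integral, so a.e. \<open>\<parallel>u\<^sub>j x\<parallel>\<^sup>p < 2\<^sup>-\<^sup>j\<close> eventually.\<close>
  define w where "w j x = 2 ^ j * norm (u j x) powr p" for j x
  have [measurable]: "\<And>j. w j \<in> borel_measurable M"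
    unfolding w_def by measurable
  have "(\<integral>\<^sup>+x. (\<Sum>j. ennreal (w j x)) \<partial>M) = (\<Sum>j. \<integral>\<^sup>+x. ennreal (w j x) \<partial>M)"
    by (intro nn_integral_suminf) measurable
  also have "\<dots> \<le> (\<Sum>j. ennreal ((1/2) ^ j))"
  proof (intro suminf_le)
    fix j
    have "(\<integral>\<^sup>+x. ennreal (w j x) \<partial>M) = ennreal (2 ^ j) * (\<integral>\<^sup>+x. ennreal (norm (u j x) powr p) \<partial>M)"
      unfolding w_def by (simp add: ennreal_mult nn_integral_cmult)
    also have "\<dots> \<le> ennreal (2 ^ j) * ennreal ((1/4) ^ j)"
      by (intro mult_left_mono le) simp
    also have "\<dots> = ennreal ((1/2) ^ j)"
      by (simp add: ennreal_mult[symmetric] power_mult_distrib[symmetric])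
    finally show "(\<integral>\<^sup>+x. ennreal (w j x) \<partial>M) \<le> ennreal ((1/2) ^ j)" .
  qed auto
  also have "\<dots> = ennreal (\<Sum>j. (1/2) ^ j)"
    by (intro suminf_ennreal2) (auto intro: summable_geometric)
  finally have "AE x in M. (\<Sum>j. ennreal (w j x)) \<noteq> \<infinity>"
    by (intro nn_integral_PInf_AE) (auto simp: top_unique)
  then show ?thesis
  proof eventually_elim
    case (elim x)
    then have "summable (\<lambda>j. w j x)"
      by (intro summable_suminf_not_top) (auto simp: w_def)
    then have "eventually (\<lambda>j. w j x < 1) sequentially"
      by (intro order_tendstoD(2)[OF summable_LIMSEQ_zero]) auto
    then have "eventually (\<lambda>j. norm (norm (u j x)) \<le> ((1/2) powr (1 / p)) ^ j) sequentially"
    proof eventually_elim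
      case (elim j)
      then have "norm (u j x) powr p \<le> (1/2) ^ j"
        by (simp add: w_def field_simps)
      then have "(norm (u j x) powr p) powr (1 / p) \<le> ((1/2) ^ j) powr (1 / p)"
        using p by (intro powr_mono2) auto
      then show ?case
        using p by (simp add: powr_powr powr_realpow[symmetric] mult.commute)
    qed
    moreover have "summable (\<lambda>j. ((1/2::real) powr (1 / p)) ^ j)"
      using p powr_less_mono2[of "1 / p" "1/2" 1] by (intro summable_geometric) simp
    ultimately show ?case
      by (rule summable_comparison_test_ev)
  qed
qed

lemma convergent_if_summable_norm_diff:
  fixes a :: "nat \<Rightarrow> 'a::banach"
  assumes "summable (\<lambda>j. norm (a (Suc j) - a j))"
  shows "convergent a"
proof -
  have "(\<lambda>j. \<Sum>i<j. a (Suc i) - a i) \<longlonglongrightarrow> (\<Sum>j. a (Suc j) - a j)"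
    using summable_norm_cancel[OF assms] by (rule summable_LIMSEQ)
  then have "(\<lambda>j. a 0 + (\<Sum>i<j. a (Suc i) - a i)) \<longlonglongrightarrow> a 0 + (\<Sum>j. a (Suc j) - a j)"
    by (intro tendsto_add tendsto_const)
  then show ?thesis
    by (auto simp: sum_lessThan_telescope convergent_def)
qed

lemma Cauchy_fast_subseq:
  fixes d :: "nat \<Rightarrow> nat \<Rightarrow> real"
  assumes "\<forall>e>0. \<exists>M. \<forall>m\<ge>M. \<forall>n\<ge>M. d m n < e"
  obtains s where "\<And>j. j \<le> s j" and "\<And>j. d (s (Suc j)) (s j) < (1/4) ^ j"
proof -
  have "\<forall>j. \<exists>M. \<forall>m\<ge>M. \<forall>n\<ge>M. d m n < (1/4) ^ j"
    using assms by simp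
  then obtain M where M: "\<And>j m n. M j \<le> m \<Longrightarrow> M j \<le> n \<Longrightarrow> d m n < (1/4) ^ j"
    by metis
  define s where "s j = j + (\<Sum>i\<le>j. M i)" for j
  have s: "M j \<le> s j" "s j \<le> s (Suc j)" for j
    using member_le_sum[of j "{..j}" M] by (auto simp: s_def)
  show ?thesis
  proof (rule that)
    show "j \<le> s j" for j
      by (simp add: s_def)
    show "d (s (Suc j)) (s j) < (1/4) ^ j" for j
      using s by (intro M) (auto intro: order_trans)
  qed
qed

lemma set_borel_measurable_add:
  fixes f g :: "'a \<Rightarrow> 'b::{real_normed_vector, second_countable_topology}"
  assumes "set_borel_measurable M A f" and "set_borel_measurable M A g"
  shows "set_borel_measurable M A (\<lambda>x. f x + g x)"
  using borel_measurable_add[OF assms[unfolded set_borel_measurable_def]]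
  by (simp add: set_borel_measurable_def scaleR_add_right)

lemma set_borel_measurable_cmult:
  fixes f :: "'a \<Rightarrow> complex"
  assumes "set_borel_measurable M A f"
  shows "set_borel_measurable M A (\<lambda>x. c * f x)"
proof -
  have "(\<lambda>x. c * (indicator A x *\<^sub>R f x)) \<in> borel_measurable M"
    using assms unfolding set_borel_measurable_def by measurable
  then show ?thesis
    by (simp add: set_borel_measurable_def mult_scaleR_right)
qed

section \<open>Local \<open>L\<^sup>p\<close> norms\<close>

lemma sets_Ik [measurable]: "Ik k \<in> sets lebesgue"
  unfolding Ik_def by simp

lemma Ik_subset_dom_am: "k \<in> K \<Longrightarrow> Ik k \<subseteq> dom_am K"
  by (auto simp: dom_am_def)

lemma AE_dom_am_iff:
  "(AE x in lebesgue. x \<in> dom_am K \<longrightarrow> P x) \<longleftrightarrow> (\<forall>k\<in>K. AE x in lebesgue_on (Ik k). P x)"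
proof -
  have "(AE x in lebesgue. x \<in> dom_am K \<longrightarrow> P x) \<longleftrightarrow> (AE x in lebesgue. \<forall>k\<in>K. x \<in> Ik k \<longrightarrow> P x)"
    by (intro AE_cong) (auto simp: dom_am_def)
  also have "\<dots> \<longleftrightarrow> (\<forall>k\<in>K. AE x in lebesgue. x \<in> Ik k \<longrightarrow> P x)"
    by (rule AE_ball_countable) simp
  also have "\<dots> \<longleftrightarrow> (\<forall>k\<in>K. AE x in lebesgue_on (Ik k). P x)"
    by (simp add: AE_restrict_space_iff)
  finally show ?thesis .
qed

lemma borel_measurable_on_Ik:
  fixes f :: "real \<Rightarrow> complex"
  assumes "set_borel_measurable lebesgue (dom_am K) f" and "k \<in> K"
  shows "f \<in> borel_measurable (lebesgue_on (Ik k))"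
  using set_borel_measurable_subset[OF assms(1) sets_Ik[of k] Ik_subset_dom_am[OF assms(2)]]
  by (simp add: set_borel_measurable_def borel_measurable_restrict_space_iff)

lemma loc_int_eq_lebesgue_on: "loc_int p f k = (\<integral>\<^sup>+x. ennreal (cmod (f x) powr p) \<partial>lebesgue_on (Ik k))"
  unfolding loc_int_def by (simp add: nn_integral_restrict_space)

lemma loc_int_cmult:
  assumes "f \<in> borel_measurable (lebesgue_on (Ik k))"
  shows "loc_int p (\<lambda>x. c * f x) k = ennreal (cmod c powr p) * loc_int p f k"
  unfolding loc_int_eq_lebesgue_on using assms
  by (simp add: norm_mult powr_mult ennreal_mult nn_integral_cmult)

lemma loc_int_cong_AE: "(AE x in lebesgue_on (Ik k). f x = g x) \<Longrightarrow> loc_int p f k = loc_int p g k"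
  unfolding loc_int_eq_lebesgue_on by (intro nn_integral_cong_AE) auto

lemma loc_int_eq_0_iff:
  assumes "f \<in> borel_measurable (lebesgue_on (Ik k))" and "0 < p"
  shows "loc_int p f k = 0 \<longleftrightarrow> (AE x in lebesgue_on (Ik k). f x = 0)"
  unfolding loc_int_eq_lebesgue_on using assms by (simp add: nn_integral_0_iff_AE)

lemma loc_int_le_liminf:
  assumes p: "0 < p" and H: "\<And>j. H j \<in> borel_measurable (lebesgue_on (Ik k))"
    and lim: "AE x in lebesgue_on (Ik k). (\<lambda>j. H j x) \<longlonglongrightarrow> h x"
  shows "loc_int p h k \<le> liminf (\<lambda>j. loc_int p (H j) k)"
proof -
  have "loc_int p h k = (\<integral>\<^sup>+x. liminf (\<lambda>j. ennreal (cmod (H j x) powr p)) \<partial>lebesgue_on (Ik k))"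
    unfolding loc_int_eq_lebesgue_on using lim
  proof (intro nn_integral_cong_AE, eventually_elim)
    case (elim x)
    then have "(\<lambda>j. ennreal (cmod (H j x) powr p)) \<longlonglongrightarrow> ennreal (cmod (h x) powr p)"
      using p by (intro tendsto_ennrealI tendsto_powr' tendsto_norm) auto
    from lim_imp_Liminf[OF trivial_limit_sequentially this] show ?case
      by simp
  qed
  also have "\<dots> \<le> liminf (\<lambda>j. loc_int p (H j) k)"
    unfolding loc_int_eq_lebesgue_on using H by (intro nn_integral_liminf) measurable
  finally show ?thesis .
qed

text \<open>As in \<^const>\<open>eps_term\<close>, an infinite local integral yields the junk value \<open>0\<close> here;
  membership in \<^const>\<open>gam_space\<close> excludes it by a separate condition.\<close>

definition loc_norm :: "real \<Rightarrow> (real \<Rightarrow> complex) \<Rightarrow> int \<Rightarrow> real" where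
  "loc_norm p f k = enn2real (loc_int p f k) powr (1 / p)"

lemma loc_norm_nonneg: "0 \<le> loc_norm p f k"
  by (simp add: loc_norm_def)

lemma loc_norm_powr: "loc_norm p f k powr r = enn2real (loc_int p f k) powr (r / p)"
  by (simp add: loc_norm_def powr_powr)

lemma loc_int_eq_loc_norm: "loc_int p f k < \<infinity> \<Longrightarrow> 0 < p \<Longrightarrow> loc_int p f k = ennreal (loc_norm p f k powr p)"
  by (simp add: loc_norm_powr)

lemma loc_int_add:
  assumes p: "1 \<le> p"
    and f: "f \<in> borel_measurable (lebesgue_on (Ik k))" and g: "g \<in> borel_measurable (lebesgue_on (Ik k))"
    and "loc_int p f k < \<infinity>" and "loc_int p g k < \<infinity>"
  shows "loc_int p (\<lambda>x. f x + g x) k < \<infinity>"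
    and "loc_norm p (\<lambda>x. f x + g x) k \<le> loc_norm p f k + loc_norm p g k"
proof -
  have "loc_int p (\<lambda>x. f x + g x) k
      \<le> (\<integral>\<^sup>+x. ennreal ((cmod (f x) + cmod (g x)) powr p) \<partial>lebesgue_on (Ik k))"
    unfolding loc_int_eq_lebesgue_on using p
    by (intro nn_integral_mono ennreal_leI powr_mono2) (auto intro: norm_triangle_ineq)
  also have "\<dots> \<le> ennreal ((loc_norm p f k + loc_norm p g k) powr p)"
    unfolding loc_norm_def using assms
    by (intro Minkowski_nn_integral) (auto simp: loc_int_eq_lebesgue_on[symmetric] ennreal_enn2real_if)
  finally have le: "loc_int p (\<lambda>x. f x + g x) k \<le> ennreal ((loc_norm p f k + loc_norm p g k) powr p)" .
  then show "loc_int p (\<lambda>x. f x + g x) k < \<infinity>"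
    by (simp add: le_less_trans)
  show "loc_norm p (\<lambda>x. f x + g x) k \<le> loc_norm p f k + loc_norm p g k"
    unfolding loc_norm_def[of p "\<lambda>x. f x + g x"] using le p
    by (intro enn2real_powr_inverse_le) (auto simp: loc_norm_nonneg)
qed

lemma loc_norm_cmult:
  assumes "f \<in> borel_measurable (lebesgue_on (Ik k))" and "0 < p"
  shows "loc_norm p (\<lambda>x. c * f x) k = cmod c * loc_norm p f k"
  using assms by (simp add: loc_norm_def loc_int_cmult enn2real_mult powr_mult powr_powr)

section \<open>The \<open>\<epsilon>\<close>-terms and the norm\<close>

definition eps_sum :: "real \<Rightarrow> real \<Rightarrow> int set \<Rightarrow> (real \<Rightarrow> complex) \<Rightarrow> ennreal" where
  "eps_sum p r K f = (\<integral>\<^sup>+k. ennreal (loc_norm p f k powr r) \<partial>count_space K)"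

lemma eps_term_eq:
  "eps_term p q \<theta> K f \<epsilon> =
     (if eps_sum p (q * (1 + \<epsilon>)) K f = \<infinity> then \<infinity>
      else ennreal ((\<epsilon> powr \<theta> * enn2real (eps_sum p (q * (1 + \<epsilon>)) K f)) powr (1 / (q * (1 + \<epsilon>)))))"
  unfolding eps_term_def eps_sum_def loc_norm_powr Let_def ..

lemma eps_term_finite:
  assumes "r = q * (1 + \<epsilon>)" and "eps_sum p r K f < \<infinity>" and "0 \<le> \<epsilon>"
  shows "eps_term p q \<theta> K f \<epsilon> = ennreal (\<epsilon> powr (\<theta> / r) * enn2real (eps_sum p r K f) powr (1 / r))"
  using assms by (simp add: eps_term_eq powr_mult powr_powr)

lemma eps_term_le_iff:
  assumes "0 < \<epsilon>" and "0 < q" and "0 \<le> e"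
  shows "eps_term p q \<theta> K f \<epsilon> \<le> ennreal e \<longleftrightarrow>
    eps_sum p (q * (1 + \<epsilon>)) K f \<le> ennreal (e powr (q * (1 + \<epsilon>)) / \<epsilon> powr \<theta>)"
proof (cases "eps_sum p (q * (1 + \<epsilon>)) K f")
  case (real s)
  have "0 < q * (1 + \<epsilon>)"
    using assms by simp
  with real assms show ?thesis
    by (simp add: eps_term_eq powr_inverse_le_iff field_simps)
qed (simp add: eps_term_eq top_unique)

lemma eps_sum_add_le:
  assumes r: "1 \<le> r"
    and le: "\<And>k. k \<in> K \<Longrightarrow> loc_norm p (\<lambda>x. f x + g x) k \<le> loc_norm p f k + loc_norm p g k"
    and f: "eps_sum p r K f < \<infinity>" and g: "eps_sum p r K g < \<infinity>"
  shows "eps_sum p r K (\<lambda>x. f x + g x) < \<infinity>"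
    and "enn2real (eps_sum p r K (\<lambda>x. f x + g x)) powr (1 / r)
           \<le> enn2real (eps_sum p r K f) powr (1 / r) + enn2real (eps_sum p r K g) powr (1 / r)"
proof -
  let ?a = "enn2real (eps_sum p r K f) powr (1 / r)" and ?b = "enn2real (eps_sum p r K g) powr (1 / r)"
  have "eps_sum p r K (\<lambda>x. f x + g x)
      \<le> (\<integral>\<^sup>+k. ennreal ((loc_norm p f k + loc_norm p g k) powr r) \<partial>count_space K)"
    unfolding eps_sum_def using r le
    by (intro nn_integral_mono ennreal_leI powr_mono2) (auto simp: loc_norm_nonneg)
  also have "\<dots> \<le> ennreal ((?a + ?b) powr r)"
    using f g by (intro Minkowski_nn_integral[OF r]) (auto simp: eps_sum_def[symmetric] loc_norm_nonneg)
  finally have le: "eps_sum p r K (\<lambda>x. f x + g x) \<le> ennreal ((?a + ?b) powr r)" .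
  then show "eps_sum p r K (\<lambda>x. f x + g x) < \<infinity>"
    by (simp add: le_less_trans)
  show "enn2real (eps_sum p r K (\<lambda>x. f x + g x)) powr (1 / r) \<le> ?a + ?b"
    using le r by (intro enn2real_powr_inverse_le) auto
qed

lemma eps_term_add_le:
  assumes p: "1 \<le> p" and q: "1 \<le> q" and \<epsilon>: "0 < \<epsilon>"
    and f: "set_borel_measurable lebesgue (dom_am K) f" "\<forall>k\<in>K. loc_int p f k < \<infinity>"
    and g: "set_borel_measurable lebesgue (dom_am K) g" "\<forall>k\<in>K. loc_int p g k < \<infinity>"
  shows "eps_term p q \<theta> K (\<lambda>x. f x + g x) \<epsilon> \<le> eps_term p q \<theta> K f \<epsilon> + eps_term p q \<theta> K g \<epsilon>"
proof (cases "eps_sum p (q * (1 + \<epsilon>)) K f < \<infinity> \<and> eps_sum p (q * (1 + \<epsilon>)) K g < \<infinity>")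
  case True
  define r where "r = q * (1 + \<epsilon>)"
  have "1 * 1 \<le> r"
    unfolding r_def using q \<epsilon> by (intro mult_mono) auto
  then have r: "1 \<le> r"
    by simp
  have loc: "loc_norm p (\<lambda>x. f x + g x) k \<le> loc_norm p f k + loc_norm p g k" if "k \<in> K" for k
    using that f g by (intro loc_int_add[OF p]) (auto intro: borel_measurable_on_Ik)
  have fin: "eps_sum p r K f < \<infinity>" "eps_sum p r K g < \<infinity>"
    using True by (simp_all add: r_def)
  note sum = eps_sum_add_le[where K=K, OF r loc fin]
  define c where "c = \<epsilon> powr (\<theta> / r)"
  have "eps_term p q \<theta> K (\<lambda>x. f x + g x) \<epsilon> = ennreal (c * enn2real (eps_sum p r K (\<lambda>x. f x + g x)) powr (1 / r))"
    using sum(1) \<epsilon> by (simp add: eps_term_finite r_def c_def)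
  also have "\<dots> \<le> ennreal (c * (enn2real (eps_sum p r K f) powr (1 / r) + enn2real (eps_sum p r K g) powr (1 / r)))"
    using sum(2) by (intro ennreal_leI mult_left_mono) (auto simp: c_def)
  also have "\<dots> = eps_term p q \<theta> K f \<epsilon> + eps_term p q \<theta> K g \<epsilon>"
    using fin \<epsilon> by (simp add: eps_term_finite r_def c_def distrib_left ennreal_plus)
  finally show ?thesis .
qed (auto simp: eps_term_eq less_top[symmetric])

lemma eps_term_cmult:
  assumes p: "0 < p" and q: "0 < q" and \<epsilon>: "0 < \<epsilon>"
    and f: "\<And>k. k \<in> K \<Longrightarrow> f \<in> borel_measurable (lebesgue_on (Ik k))"
  shows "eps_term p q \<theta> K (\<lambda>x. c * f x) \<epsilon> = ennreal (cmod c) * eps_term p q \<theta> K f \<epsilon>"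
proof -
  define r where "r = q * (1 + \<epsilon>)"
  have r: "0 < r"
    using q \<epsilon> by (simp add: r_def)
  have "eps_sum p r K (\<lambda>x. c * f x)
      = (\<integral>\<^sup>+k. ennreal (cmod c powr r) * ennreal (loc_norm p f k powr r) \<partial>count_space K)"
    unfolding eps_sum_def using f p
    by (intro nn_integral_cong) (simp add: loc_norm_cmult powr_mult ennreal_mult loc_norm_nonneg)
  also have "\<dots> = ennreal (cmod c powr r) * eps_sum p r K f"
    unfolding eps_sum_def by (rule nn_integral_cmult) simp
  finally have sum: "eps_sum p r K (\<lambda>x. c * f x) = ennreal (cmod c powr r) * eps_sum p r K f" .
  consider "c = 0" | "c \<noteq> 0" "eps_sum p r K f = \<infinity>" | "eps_sum p r K f < \<infinity>"
    by (auto simp: less_top[symmetric])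
  then show ?thesis
  proof cases
    case 1
    then have "eps_sum p r K (\<lambda>x. c * f x) = 0"
      using sum by simp
    then show ?thesis
      using 1 r \<epsilon> by (simp add: eps_term_finite[OF r_def])
  next
    case 2
    then show ?thesis
      using sum by (simp add: eps_term_eq r_def[symmetric] ennreal_mult_top)
  next
    case 3
    define s where "s = enn2real (eps_sum p r K f)"
    have "0 \<le> s"
      by (simp add: s_def)
    have "eps_term p q \<theta> K (\<lambda>x. c * f x) \<epsilon> = ennreal (\<epsilon> powr (\<theta> / r) * (cmod c powr r * s) powr (1 / r))"
      using 3 sum \<epsilon> by (simp add: eps_term_finite[OF r_def] ennreal_mult_less_top enn2real_mult s_def)
    also have "(cmod c powr r * s) powr (1 / r) = cmod c * s powr (1 / r)"
      using r \<open>0 \<le> s\<close> by (simp add: powr_mult powr_powr)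
    also have "ennreal (\<epsilon> powr (\<theta> / r) * (cmod c * s powr (1 / r))) = ennreal (cmod c) * eps_term p q \<theta> K f \<epsilon>"
      using 3 \<epsilon> by (simp add: eps_term_finite[OF r_def] s_def ennreal_mult'[symmetric] mult.left_commute)
    finally show ?thesis .
  qed
qed

lemma eps_sum_le_liminf:
  assumes p: "0 < p" and r: "0 < r"
    and Fatou: "\<And>k. k \<in> K \<Longrightarrow> loc_int p h k \<le> liminf (\<lambda>j. loc_int p (H j) k)"
    and H: "\<And>j k. k \<in> K \<Longrightarrow> loc_int p (H j) k < \<infinity>"
  shows "eps_sum p r K h \<le> liminf (\<lambda>j. eps_sum p r K (H j))"
proof -
  have "ennreal (loc_norm p h k powr r) \<le> liminf (\<lambda>j. ennreal (loc_norm p (H j) k powr r))" if k: "k \<in> K" for k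
    unfolding loc_norm_powr
  proof (rule ennreal_powr_le_liminf)
    have "ennreal (enn2real (loc_int p h k)) \<le> loc_int p h k"
      by (simp add: ennreal_enn2real_if)
    also have "\<dots> \<le> liminf (\<lambda>j. ennreal (enn2real (loc_int p (H j) k)))"
      using Fatou[OF k] H[OF k] by simp
    finally show "ennreal (enn2real (loc_int p h k)) \<le> liminf (\<lambda>j. ennreal (enn2real (loc_int p (H j) k)))" .
  qed (use p r in auto)
  then have "eps_sum p r K h \<le> (\<integral>\<^sup>+k. liminf (\<lambda>j. ennreal (loc_norm p (H j) k powr r)) \<partial>count_space K)"
    unfolding eps_sum_def by (intro nn_integral_mono) simp
  also have "\<dots> \<le> liminf (\<lambda>j. eps_sum p r K (H j))"
    unfolding eps_sum_def by (intro nn_integral_liminf) simp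
  finally show ?thesis .
qed

lemma eps_term_le_gam_norm_ext: "0 < \<epsilon> \<Longrightarrow> eps_term p q \<theta> K f \<epsilon> \<le> gam_norm_ext p q \<theta> K f"
  unfolding gam_norm_ext_def by (intro SUP_upper) simp

lemma gam_norm_ext_le_iff:
  "gam_norm_ext p q \<theta> K f \<le> x \<longleftrightarrow> (\<forall>\<epsilon>>0. eps_term p q \<theta> K f \<epsilon> \<le> x)"
  unfolding gam_norm_ext_def by (auto simp: SUP_le_iff)

lemma gam_norm_ext_add_le:
  assumes "1 \<le> p" and "1 \<le> q"
    and "set_borel_measurable lebesgue (dom_am K) f" "\<forall>k\<in>K. loc_int p f k < \<infinity>"
    and "set_borel_measurable lebesgue (dom_am K) g" "\<forall>k\<in>K. loc_int p g k < \<infinity>"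
  shows "gam_norm_ext p q \<theta> K (\<lambda>x. f x + g x) \<le> gam_norm_ext p q \<theta> K f + gam_norm_ext p q \<theta> K g"
  unfolding gam_norm_ext_le_iff
proof (intro allI impI)
  fix \<epsilon> :: real
  assume "0 < \<epsilon>"
  then have "eps_term p q \<theta> K (\<lambda>x. f x + g x) \<epsilon> \<le> eps_term p q \<theta> K f \<epsilon> + eps_term p q \<theta> K g \<epsilon>"
    using assms by (intro eps_term_add_le)
  also have "\<dots> \<le> gam_norm_ext p q \<theta> K f + gam_norm_ext p q \<theta> K g"
    using \<open>0 < \<epsilon>\<close> by (intro add_mono eps_term_le_gam_norm_ext)
  finally show "eps_term p q \<theta> K (\<lambda>x. f x + g x) \<epsilon> \<le> gam_norm_ext p q \<theta> K f + gam_norm_ext p q \<theta> K g" .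
qed

lemma gam_norm_ext_cmult:
  assumes "0 < p" and "0 < q" and "set_borel_measurable lebesgue (dom_am K) f"
  shows "gam_norm_ext p q \<theta> K (\<lambda>x. c * f x) = ennreal (cmod c) * gam_norm_ext p q \<theta> K f"
  unfolding gam_norm_ext_def SUP_mult_left_ennreal
  using assms by (intro SUP_cong refl eps_term_cmult) (auto intro: borel_measurable_on_Ik)

lemma gam_norm_ext_cong:
  assumes "\<And>k. k \<in> K \<Longrightarrow> loc_int p f k = loc_int p g k"
  shows "gam_norm_ext p q \<theta> K f = gam_norm_ext p q \<theta> K g"
  unfolding gam_norm_ext_def eps_term_def using assms
  by (simp cong: nn_integral_cong_simp)

lemma gam_norm_ext_zero: "gam_norm_ext p q \<theta> K (\<lambda>x. 0) = 0"
  by (simp add: gam_norm_ext_def eps_term_def loc_int_def)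

lemma loc_norm_le_gam_norm:
  assumes p: "0 < p" and q: "0 < q" and fin: "gam_norm_ext p q \<theta> K f < \<infinity>" and k: "k \<in> K"
  shows "loc_norm p f k \<le> gam_norm p q \<theta> K f"
proof -
  define N where "N = gam_norm p q \<theta> K f"
  have N: "gam_norm_ext p q \<theta> K f = ennreal N" "0 \<le> N"
    using fin by (simp_all add: N_def gam_norm_def)
  have "ennreal (loc_norm p f k powr (q * (1 + 1))) \<le> eps_sum p (q * (1 + 1)) K f"
    unfolding eps_sum_def using k by (rule nn_integral_ge_point)
  also have "\<dots> \<le> ennreal (N powr (q * (1 + 1)))"
    using eps_term_le_gam_norm_ext[of 1 p q \<theta> K f] eps_term_le_iff[of 1 q N] q N by simp
  finally have "(loc_norm p f k powr (q * (1 + 1))) powr (1 / (q * (1 + 1))) \<le> N"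
    using q N by (simp add: powr_inverse_le_iff loc_norm_nonneg)
  then show ?thesis
    using q by (simp add: N_def powr_powr loc_norm_nonneg)
qed

section \<open>The grand amalgam space\<close>

lemma zero_in_gam_space: "(\<lambda>x. 0) \<in> gam_space p q \<theta> K"
  by (simp add: gam_space_def set_borel_measurable_def loc_int_def gam_norm_ext_zero)

lemma gam_space_add:
  assumes p: "1 \<le> p" and q: "1 \<le> q" and f: "f \<in> gam_space p q \<theta> K" and g: "g \<in> gam_space p q \<theta> K"
  shows "(\<lambda>x. f x + g x) \<in> gam_space p q \<theta> K"
proof -
  have "loc_int p (\<lambda>x. f x + g x) k < \<infinity>" if "k \<in> K" for k
    using f g that by (intro loc_int_add(1)[OF p]) (auto simp: gam_space_def intro: borel_measurable_on_Ik)
  moreover have "gam_norm_ext p q \<theta> K (\<lambda>x. f x + g x) \<le> gam_norm_ext p q \<theta> K f + gam_norm_ext p q \<theta> K g"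
    using f g by (intro gam_norm_ext_add_le[OF p q]) (auto simp: gam_space_def)
  then have "gam_norm_ext p q \<theta> K (\<lambda>x. f x + g x) < \<infinity>"
    using f g by (auto simp: gam_space_def less_top[symmetric] ennreal_add_eq_top top_unique)
  ultimately show ?thesis
    using f g by (simp add: gam_space_def set_borel_measurable_add)
qed

lemma gam_space_cmult:
  assumes p: "0 < p" and q: "0 < q" and f: "f \<in> gam_space p q \<theta> K"
  shows "(\<lambda>x. c * f x) \<in> gam_space p q \<theta> K"
proof -
  have "loc_int p (\<lambda>x. c * f x) k < \<infinity>" if "k \<in> K" for k
    using f that by (auto simp: gam_space_def loc_int_cmult borel_measurable_on_Ik ennreal_mult_less_top)
  moreover have "gam_norm_ext p q \<theta> K (\<lambda>x. c * f x) < \<infinity>"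
    using f by (auto simp: gam_space_def gam_norm_ext_cmult[OF p q] ennreal_mult_less_top)
  ultimately show ?thesis
    using f by (simp add: gam_space_def set_borel_measurable_cmult)
qed

lemma gam_space_diff:
  assumes "1 \<le> p" and "1 \<le> q" and "f \<in> gam_space p q \<theta> K" and "g \<in> gam_space p q \<theta> K"
  shows "(\<lambda>x. f x - g x) \<in> gam_space p q \<theta> K"
  using gam_space_add[OF assms(1,2,3) gam_space_cmult[OF _ _ assms(4), of "-1"]] assms(1,2)
  by simp

lemma gam_norm_add_le:
  assumes p: "1 \<le> p" and q: "1 \<le> q" and f: "f \<in> gam_space p q \<theta> K" and g: "g \<in> gam_space p q \<theta> K"
  shows "gam_norm p q \<theta> K (\<lambda>x. f x + g x) \<le> gam_norm p q \<theta> K f + gam_norm p q \<theta> K g"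
proof -
  have "gam_norm_ext p q \<theta> K (\<lambda>x. f x + g x) \<le> ennreal (gam_norm p q \<theta> K f + gam_norm p q \<theta> K g)"
    using f g gam_norm_ext_add_le[OF p q] by (simp add: gam_space_def gam_norm_def)
  then show ?thesis
    unfolding gam_norm_def[of _ _ _ _ "\<lambda>x. f x + g x"] by (rule enn2real_leI[rotated]) (simp add: gam_norm_def)
qed

lemma gam_norm_cmult:
  assumes "0 < p" and "0 < q" and "f \<in> gam_space p q \<theta> K"
  shows "gam_norm p q \<theta> K (\<lambda>x. c * f x) = cmod c * gam_norm p q \<theta> K f"
  using assms by (simp add: gam_space_def gam_norm_def gam_norm_ext_cmult enn2real_mult)

lemma loc_int_cong_ae_eq_on: "ae_eq_on K f g \<Longrightarrow> k \<in> K \<Longrightarrow> loc_int p f k = loc_int p g k"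
  unfolding ae_eq_on_def AE_dom_am_iff by (blast intro: loc_int_cong_AE)

lemma gam_space_cong_ae_eq_on:
  assumes f: "f \<in> gam_space p q \<theta> K" and g: "set_borel_measurable lebesgue (dom_am K) g"
    and fg: "ae_eq_on K f g"
  shows "g \<in> gam_space p q \<theta> K" and "gam_norm p q \<theta> K g = gam_norm p q \<theta> K f"
proof -
  have loc: "\<And>k. k \<in> K \<Longrightarrow> loc_int p f k = loc_int p g k"
    using fg by (rule loc_int_cong_ae_eq_on)
  show "g \<in> gam_space p q \<theta> K" "gam_norm p q \<theta> K g = gam_norm p q \<theta> K f"
    using f g loc gam_norm_ext_cong[OF loc] by (auto simp: gam_space_def gam_norm_def)
qed

lemma gam_norm_eq_0_iff:
  assumes p: "0 < p" and q: "0 < q" and f: "f \<in> gam_space p q \<theta> K"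
  shows "gam_norm p q \<theta> K f = 0 \<longleftrightarrow> ae_eq_on K f (\<lambda>x. 0)"
proof
  assume N: "gam_norm p q \<theta> K f = 0"
  have "AE x in lebesgue_on (Ik k). f x = 0" if k: "k \<in> K" for k
  proof -
    have "loc_norm p f k = 0"
      using loc_norm_le_gam_norm[OF p q _ k, of \<theta> f] f N by (simp add: gam_space_def antisym loc_norm_nonneg)
    then have "loc_int p f k = 0"
      using f k by (auto simp: loc_norm_def gam_space_def enn2real_eq_0_iff)
    moreover have "f \<in> borel_measurable (lebesgue_on (Ik k))"
      using f k by (intro borel_measurable_on_Ik) (auto simp: gam_space_def)
    ultimately show ?thesis
      using loc_int_eq_0_iff p by blast
  qed
  then show "ae_eq_on K f (\<lambda>x. 0)"
    by (simp add: ae_eq_on_def AE_dom_am_iff)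
next
  assume "ae_eq_on K f (\<lambda>x. 0)"
  then have "gam_norm_ext p q \<theta> K f = gam_norm_ext p q \<theta> K (\<lambda>x. 0)"
    by (intro gam_norm_ext_cong loc_int_cong_ae_eq_on)
  then show "gam_norm p q \<theta> K f = 0"
    by (simp add: gam_norm_def gam_norm_ext_zero)
qed

section \<open>Completeness\<close>

lemma gam_space_AE_summable:
  assumes p: "1 \<le> p" and q: "0 < q" and h: "\<And>j. h j \<in> gam_space p q \<theta> K"
    and small: "\<And>j. gam_norm p q \<theta> K (h j) \<le> (1/4) ^ j"
  shows "AE x in lebesgue. x \<in> dom_am K \<longrightarrow> summable (\<lambda>j. norm (h j x))"
  unfolding AE_dom_am_iff
proof
  fix k
  assume k: "k \<in> K"
  show "AE x in lebesgue_on (Ik k). summable (\<lambda>j. norm (h j x))"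
  proof (rule AE_summable_norm_if_nn_integral_le)
    show "h j \<in> borel_measurable (lebesgue_on (Ik k))" for j
      using h k by (intro borel_measurable_on_Ik) (auto simp: gam_space_def)
    fix j
    have "loc_norm p (h j) k \<le> (1/4) ^ j"
      using loc_norm_le_gam_norm[of p q \<theta> K "h j" k] h[of j] small[of j] p q k
      by (simp add: gam_space_def)
    then have "loc_norm p (h j) k powr p \<le> ((1/4) ^ j) powr p"
      using p by (intro powr_mono2) (auto simp: loc_norm_nonneg)
    also have "\<dots> \<le> ((1/4) ^ j) powr 1"
      using p by (intro powr_mono') (auto simp: power_le_one)
    finally have "loc_int p (h j) k \<le> ennreal ((1/4) ^ j)"
      using h[of j] k p by (simp add: gam_space_def loc_int_eq_loc_norm)
    then show "(\<integral>\<^sup>+x. ennreal (norm (h j x) powr p) \<partial>lebesgue_on (Ik k)) \<le> ennreal ((1/4) ^ j)"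
      by (simp add: loc_int_eq_lebesgue_on)
  qed (use p in simp)
qed

lemma loc_int_le_liminf_dom_am:
  assumes p: "0 < p" and H: "\<And>j. set_borel_measurable lebesgue (dom_am K) (H j)"
    and lim: "AE x in lebesgue. x \<in> dom_am K \<longrightarrow> (\<lambda>j. H j x) \<longlonglongrightarrow> h x" and k: "k \<in> K"
  shows "loc_int p h k \<le> liminf (\<lambda>j. loc_int p (H j) k)"
  using H k lim p unfolding AE_dom_am_iff
  by (intro loc_int_le_liminf) (auto intro: borel_measurable_on_Ik)

lemma loc_int_limit_le:
  assumes p: "0 < p" and q: "0 < q" and H: "\<And>j. H j \<in> gam_space p q \<theta> K"
    and lim: "AE x in lebesgue. x \<in> dom_am K \<longrightarrow> (\<lambda>j. H j x) \<longlonglongrightarrow> h x"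
    and bound: "eventually (\<lambda>j. gam_norm p q \<theta> K (H j) \<le> e) sequentially" and k: "k \<in> K"
  shows "loc_int p h k \<le> ennreal (e powr p)"
proof -
  have Fatou: "loc_int p h k \<le> liminf (\<lambda>j. loc_int p (H j) k)"
    using H by (intro loc_int_le_liminf_dom_am[OF p _ lim k]) (simp add: gam_space_def)
  have "eventually (\<lambda>j. loc_int p (H j) k \<le> ennreal (e powr p)) sequentially"
    using bound
  proof eventually_elim
    case (elim j)
    then have "loc_norm p (H j) k \<le> e"
      using loc_norm_le_gam_norm[OF p q _ k, of \<theta> "H j"] H[of j] by (simp add: gam_space_def)
    then show ?case
      using p H[of j] k by (simp add: gam_space_def loc_int_eq_loc_norm powr_mono2 loc_norm_nonneg)
  qed
  then have "liminf (\<lambda>j. loc_int p (H j) k) \<le> ennreal (e powr p)"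
    by (intro Liminf_le) simp_all
  with Fatou show ?thesis
    by (rule order_trans)
qed

lemma gam_norm_ext_limit_le:
  assumes p: "0 < p" and q: "0 < q" and H: "\<And>j. H j \<in> gam_space p q \<theta> K"
    and lim: "AE x in lebesgue. x \<in> dom_am K \<longrightarrow> (\<lambda>j. H j x) \<longlonglongrightarrow> h x"
    and bound: "eventually (\<lambda>j. gam_norm p q \<theta> K (H j) \<le> e) sequentially" and e: "0 \<le> e"
  shows "gam_norm_ext p q \<theta> K h \<le> ennreal e"
  unfolding gam_norm_ext_le_iff
proof (intro allI impI)
  fix \<epsilon> :: real
  assume \<epsilon>: "0 < \<epsilon>"
  define B where "B = e powr (q * (1 + \<epsilon>)) / \<epsilon> powr \<theta>"
  have "eventually (\<lambda>j. eps_sum p (q * (1 + \<epsilon>)) K (H j) \<le> ennreal B) sequentially"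
    using bound
  proof eventually_elim
    case (elim j)
    then have "eps_term p q \<theta> K (H j) \<epsilon> \<le> ennreal e"
      using eps_term_le_gam_norm_ext[OF \<epsilon>, of p q \<theta> K "H j"] ennreal_leI[OF elim] H[of j]
      by (simp add: gam_space_def gam_norm_def)
    then show ?case
      using \<epsilon> q e by (simp add: eps_term_le_iff B_def)
  qed
  then have "liminf (\<lambda>j. eps_sum p (q * (1 + \<epsilon>)) K (H j)) \<le> ennreal B"
    by (intro Liminf_le) simp_all
  moreover have "eps_sum p (q * (1 + \<epsilon>)) K h \<le> liminf (\<lambda>j. eps_sum p (q * (1 + \<epsilon>)) K (H j))"
  proof (rule eps_sum_le_liminf)
    show "loc_int p h k \<le> liminf (\<lambda>j. loc_int p (H j) k)" if "k \<in> K" for k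
      using H by (intro loc_int_le_liminf_dom_am[OF p _ lim that]) (simp add: gam_space_def)
    show "loc_int p (H j) k < \<infinity>" if "k \<in> K" for j k
      using H that by (simp add: gam_space_def)
  qed (use p q \<epsilon> in simp_all)
  ultimately have "eps_sum p (q * (1 + \<epsilon>)) K h \<le> ennreal B"
    by (rule order_trans[rotated])
  then show "eps_term p q \<theta> K h \<epsilon> \<le> ennreal e"
    using \<epsilon> q e by (simp add: eps_term_le_iff B_def)
qed

lemma gam_space_Fatou:
  assumes p: "0 < p" and q: "0 < q" and H: "\<And>j. H j \<in> gam_space p q \<theta> K"
    and h: "set_borel_measurable lebesgue (dom_am K) h"
    and lim: "AE x in lebesgue. x \<in> dom_am K \<longrightarrow> (\<lambda>j. H j x) \<longlonglongrightarrow> h x"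
    and bound: "eventually (\<lambda>j. gam_norm p q \<theta> K (H j) \<le> e) sequentially"
  shows "h \<in> gam_space p q \<theta> K" and "gam_norm p q \<theta> K h \<le> e"
proof -
  from bound obtain j where "gam_norm p q \<theta> K (H j) \<le> e"
    by (auto simp: eventually_sequentially)
  then have e: "0 \<le> e"
    by (metis enn2real_nonneg gam_norm_def order_trans)
  have "loc_int p h k < \<infinity>" if "k \<in> K" for k
    using loc_int_limit_le[OF p q H lim bound that] by (simp add: le_less_trans)
  moreover have norm_le: "gam_norm_ext p q \<theta> K h \<le> ennreal e"
    by (rule gam_norm_ext_limit_le[OF p q H lim bound e])
  then have "gam_norm_ext p q \<theta> K h < \<infinity>"
    using ennreal_less_top[of e] by (simp add: le_less_trans)
  ultimately show "h \<in> gam_space p q \<theta> K"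
    using h by (simp add: gam_space_def)
  show "gam_norm p q \<theta> K h \<le> e"
    using norm_le e by (simp add: gam_norm_def enn2real_leI)
qed

lemma gam_space_Cauchy_AE_limit:
  assumes p: "1 \<le> p" and q: "1 \<le> q" and F: "\<And>n. F n \<in> gam_space p q \<theta> K"
    and Cauchy: "\<forall>e>0. \<exists>M. \<forall>m\<ge>M. \<forall>n\<ge>M. gam_norm p q \<theta> K (\<lambda>x. F m x - F n x) < e"
  obtains s g where "\<And>j. j \<le> s j" and "set_borel_measurable lebesgue (dom_am K) g"
    and "AE x in lebesgue. x \<in> dom_am K \<longrightarrow> (\<lambda>j. F (s j) x) \<longlonglongrightarrow> g x"
proof -
  obtain s where s: "\<And>j. j \<le> s j"
    and fast: "\<And>j. gam_norm p q \<theta> K (\<lambda>x. F (s (Suc j)) x - F (s j) x) < (1/4) ^ j"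
    using Cauchy_fast_subseq[of "\<lambda>m n. gam_norm p q \<theta> K (\<lambda>x. F m x - F n x)"] Cauchy by blast
  have "AE x in lebesgue. x \<in> dom_am K \<longrightarrow> summable (\<lambda>j. norm (F (s (Suc j)) x - F (s j) x))"
    using p q F fast by (intro gam_space_AE_summable) (auto intro: gam_space_diff less_imp_le)
  then have conv: "AE x in lebesgue. x \<in> dom_am K \<longrightarrow> convergent (\<lambda>j. F (s j) x)"
    by eventually_elim (auto intro: convergent_if_summable_norm_diff)
  define g where "g x = lim (\<lambda>j. indicator (dom_am K) x *\<^sub>R F (s j) x)" for x
  have "g \<in> borel_measurable lebesgue"
    unfolding g_def using F
    by (intro borel_measurable_lim_metric) (auto simp: gam_space_def set_borel_measurable_def)
  moreover have "indicator (dom_am K) x *\<^sub>R g x = g x" for x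
    by (cases "x \<in> dom_am K") (auto simp: g_def limI)
  ultimately have "set_borel_measurable lebesgue (dom_am K) g"
    by (simp add: set_borel_measurable_def)
  moreover have "AE x in lebesgue. x \<in> dom_am K \<longrightarrow> (\<lambda>j. F (s j) x) \<longlonglongrightarrow> g x"
    using conv by eventually_elim (simp add: g_def convergent_LIMSEQ_iff)
  ultimately show thesis
    by (rule that[OF s])
qed

lemma gam_space_complete:
  assumes p: "1 \<le> p" and q: "1 \<le> q" and F: "\<And>n. F n \<in> gam_space p q \<theta> K"
    and Cauchy: "\<forall>e>0. \<exists>M. \<forall>m\<ge>M. \<forall>n\<ge>M. gam_norm p q \<theta> K (\<lambda>x. F m x - F n x) < e"
  shows "\<exists>g\<in>gam_space p q \<theta> K. (\<lambda>n. gam_norm p q \<theta> K (\<lambda>x. F n x - g x)) \<longlonglongrightarrow> 0"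
proof -
  obtain s g where s: "\<And>j. j \<le> s j" and g: "set_borel_measurable lebesgue (dom_am K) g"
    and lim: "AE x in lebesgue. x \<in> dom_am K \<longrightarrow> (\<lambda>j. F (s j) x) \<longlonglongrightarrow> g x"
    using gam_space_Cauchy_AE_limit[OF p q F Cauchy] by blast
  have close: "(\<lambda>x. F n x - g x) \<in> gam_space p q \<theta> K \<and> gam_norm p q \<theta> K (\<lambda>x. F n x - g x) \<le> e"
    if M: "\<forall>m\<ge>M. \<forall>n\<ge>M. gam_norm p q \<theta> K (\<lambda>x. F m x - F n x) < e" and n: "M \<le> n" for M n e
  proof -
    have "eventually (\<lambda>j. gam_norm p q \<theta> K (\<lambda>x. F n x - F (s j) x) \<le> e) sequentially"
      using eventually_ge_at_top[of M]
    proof eventually_elim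
      case (elim j)
      then have "M \<le> s j"
        using s[of j] by linarith
      then show ?case
        using M n by (simp add: less_imp_le)
    qed
    moreover have "set_borel_measurable lebesgue (dom_am K) (\<lambda>x. F n x + (-1) * g x)"
      using F g by (intro set_borel_measurable_add set_borel_measurable_cmult) (auto simp: gam_space_def)
    moreover have "AE x in lebesgue. x \<in> dom_am K \<longrightarrow> (\<lambda>j. F n x - F (s j) x) \<longlonglongrightarrow> F n x - g x"
      using lim by eventually_elim (auto intro: tendsto_diff)
    ultimately show ?thesis
      using p q F gam_space_Fatou[of p q "\<lambda>j x. F n x - F (s j) x" \<theta> K "\<lambda>x. F n x - g x" e]
      by (auto intro: gam_space_diff)
  qed
  obtain M where "\<forall>m\<ge>M. \<forall>n\<ge>M. gam_norm p q \<theta> K (\<lambda>x. F m x - F n x) < 1"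
    using Cauchy by (meson zero_less_one)
  then have "(\<lambda>x. F M x - g x) \<in> gam_space p q \<theta> K"
    using close[of M] by blast
  then have "(\<lambda>x. F M x - (F M x - g x)) \<in> gam_space p q \<theta> K"
    by (rule gam_space_diff[OF p q F])
  moreover have "(\<lambda>n. gam_norm p q \<theta> K (\<lambda>x. F n x - g x)) \<longlonglongrightarrow> 0"
  proof (rule LIMSEQ_I)
    fix r :: real
    assume "0 < r"
    then obtain M where "\<forall>m\<ge>M. \<forall>n\<ge>M. gam_norm p q \<theta> K (\<lambda>x. F m x - F n x) < r / 2"
      using Cauchy by (meson half_gt_zero)
    then have "norm (gam_norm p q \<theta> K (\<lambda>x. F n x - g x)) < r" if "M \<le> n" for n
      using close[of M "r / 2" n] that \<open>0 < r\<close> by (simp add: gam_norm_def)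
    then show "\<exists>M. \<forall>n\<ge>M. norm (gam_norm p q \<theta> K (\<lambda>x. F n x - g x) - 0) < r"
      by auto
  qed
  ultimately show ?thesis
    by auto
qed

theorem theorem2p4:
  fixes p q \<theta> :: real and K :: "int set"
  assumes "\<theta> > 0" and "1 \<le> p" and "1 \<le> q" and "admissible_index K"
  defines "L \<equiv> gam_space p q \<theta> K" and "N \<equiv> gam_norm p q \<theta> K"
  shows
    \<comment> \<open>L is a complex vector space (of functions)\<close>
    "(\<lambda>x. 0) \<in> L
     \<and> (\<forall>f\<in>L. \<forall>g\<in>L. (\<lambda>x. f x + g x) \<in> L)
     \<and> (\<forall>f\<in>L. \<forall>c::complex. (\<lambda>x. c * f x) \<in> L)
     \<comment> \<open>membership and norm are compatible with a.e. identification\<close>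
     \<and> (\<forall>f\<in>L. \<forall>g. set_borel_measurable lebesgue (dom_am K) g \<and> ae_eq_on K f g
            \<longrightarrow> g \<in> L \<and> N g = N f)
     \<comment> \<open>N is a norm on the classes\<close>
     \<and> (\<forall>f\<in>L. N f = 0 \<longleftrightarrow> ae_eq_on K f (\<lambda>x. 0))
     \<and> (\<forall>f\<in>L. \<forall>c::complex. N (\<lambda>x. c * f x) = cmod c * N f)
     \<and> (\<forall>f\<in>L. \<forall>g\<in>L. N (\<lambda>x. f x + g x) \<le> N f + N g)
     \<comment> \<open>completeness: every Cauchy sequence converges in L\<close>
     \<and> (\<forall>F :: nat \<Rightarrow> real \<Rightarrow> complex. (\<forall>n. F n \<in> L) \<longrightarrow>
          (\<forall>e>0. \<exists>M. \<forall>m\<ge>M. \<forall>n\<ge>M. N (\<lambda>x. F m x - F n x) < e) \<longrightarrow>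
          (\<exists>g\<in>L. (\<lambda>n. N (\<lambda>x. F n x - g x)) \<longlonglongrightarrow> 0))"
proof -
  have p: "0 < p" and q: "0 < q"
    using assms by auto
  show ?thesis
    unfolding L_def N_def
    by (intro conjI ballI allI impI; (elim conjE)?)
       (auto simp: gam_norm_eq_0_iff[OF p q] gam_norm_cmult[OF p q]
          intro: zero_in_gam_space gam_space_add[OF assms(2,3)] gam_space_cmult[OF p q]
            gam_space_cong_ae_eq_on gam_norm_add_le[OF assms(2,3)] gam_space_complete[OF assms(2,3)])
qed

end
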